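(* Let $d\ge1$ and let $\sigma\subset\mathbb{R}^d$ be an object with center $c$ and width $w\ge 1$. Let $i=\lfloor\log_2 w\rfloor$. For each $j\in[d]$ write uniquely $c(x_j)=z_j+f_j$ with $z_j\in 2^{i+1}\mathbb{Z}$ and $f_j\in[0,2^{i+1})$, and define the point $r\in(2^{i+1}\mathbb{Z})^d$ by $r(x_j)=z_j$ if $f_j\in[0,2^i)$ and $r(x_j)=z_j+2^{i+1}$ if $f_j\in[2^i,2^{i+1})$. Then $r\in\sigma$.
   Context: An object is a compact subset of $\mathbb{R}^d$ with non-empty interior; $\partial\sigma$ is its boundary; $d_\infty$ is the $L_\infty$ distance; $p(x_j)$ is the $j$th coordinate of $p$; $\beta\mathbb{Z}=\{\beta z:z\in\mathbb{Z}\}$. For $x\in\sigma$, $\alpha(x)=\min_{y\in\partial\sigma}d_\infty(x,y)/\max_{y\in\partial\sigma}d_\infty(x,y)$; a center of $\sigma$ is a point $c\in\sigma$ maximizing $\alpha(x)$ over $x\in\sigma$, and the width of $\sigma$ is $\min_{y\in\partial\sigma}d_\infty(c,y)$. *)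

theory Defs
  imports "HOL-Analysis.Analysis"
begin

definition dinf :: "real^'n \<Rightarrow> real^'n \<Rightarrow> real" where
  "dinf x y = Max (range (\<lambda>j. \<bar>x $ j - y $ j\<bar>))"

definition is_object :: "(real^'n) set \<Rightarrow> bool" where
  "is_object S \<longleftrightarrow> compact S \<and> interior S \<noteq> {}"

definition alpha :: "(real^'n) set \<Rightarrow> real^'n \<Rightarrow> real" where
  "alpha S x = (INF y\<in>frontier S. dinf x y) / (SUP y\<in>frontier S. dinf x y)"

definition is_center :: "(real^'n) set \<Rightarrow> real^'n \<Rightarrow> bool" where
  "is_center S c \<longleftrightarrow> c \<in> S \<and> (\<forall>x\<in>S. alpha S x \<le> alpha S c)"

definition width_at :: "(real^'n) set \<Rightarrow> real^'n \<Rightarrow> real" where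
  "width_at S c = (INF y\<in>frontier S. dinf c y)"

end

theory Submission
  imports Defs
begin

text \<open>The point \<open>r\<close> rounds every coordinate of \<open>c\<close> to a nearest point of \<open>2\<^sup>i\<^sup>+\<^sup>1\<int>\<close>, so
  \<open>d\<^sub>\<infinity>(c, r) \<le> 2\<^sup>i \<le> w\<close>. A closed set contains the closed \<open>L\<^sub>\<infinity>\<close>-ball around any of its points
  whose radius is the distance to the frontier: the segment from the point to anything
  outside the set meets the frontier before its endpoint, hence strictly inside that ball.\<close>

lemma component_le_dinf: "\<bar>x $ j - y $ j\<bar> \<le> dinf x y"
  unfolding dinf_def by (rule Max_ge) auto

lemma dinf_nonneg: "0 \<le> dinf x y"
  using component_le_dinf abs_ge_zero order_trans by metis

lemma dinf_le_iff: "dinf x y \<le> b \<longleftrightarrow> (\<forall>j. \<bar>x $ j - y $ j\<bar> \<le> b)"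
  unfolding dinf_def by (subst Max_le_iff) auto

lemma width_at_le_dinf:
  assumes "y \<in> frontier S"
  shows "width_at S c \<le> dinf c y"
  unfolding width_at_def
  by (rule cINF_lower[OF _ assms]) (auto intro!: bdd_belowI[where m=0] dinf_nonneg)

lemma dinf_segment_le:
  assumes "0 \<le> u"
  shows "dinf c ((1 - u) *\<^sub>R c + u *\<^sub>R r) \<le> u * dinf c r"
proof (unfold dinf_le_iff, intro allI)
  fix j
  have "c $ j - ((1 - u) *\<^sub>R c + u *\<^sub>R r) $ j = u * (c $ j - r $ j)"
    by (simp add: algebra_simps)
  then have "\<bar>c $ j - ((1 - u) *\<^sub>R c + u *\<^sub>R r) $ j\<bar> = u * \<bar>c $ j - r $ j\<bar>"
    using assms by (simp add: abs_mult)
  also have "\<dots> \<le> u * dinf c r"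
    using component_le_dinf assms by (rule mult_left_mono)
  finally show "\<bar>c $ j - ((1 - u) *\<^sub>R c + u *\<^sub>R r) $ j\<bar> \<le> u * dinf c r" .
qed

lemma mem_if_dinf_le_width_at:
  fixes S :: "(real^'n) set"
  assumes "closed S" and "c \<in> S" and "dinf c p \<le> width_at S c"
  shows "p \<in> S"
proof (rule ccontr)
  assume "p \<notin> S"
  have "closed_segment c p \<inter> frontier S \<noteq> {}"
    by (rule connected_Int_frontier) (use assms(2) \<open>p \<notin> S\<close> in auto)
  then obtain u where u: "0 \<le> u" "u \<le> 1" and y: "(1 - u) *\<^sub>R c + u *\<^sub>R p \<in> frontier S"
    by (auto simp: in_segment)
  have "u \<noteq> 1"
    using y \<open>p \<notin> S\<close> assms(1) frontier_subset_closed by fastforce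
  have "p \<noteq> c"
    using \<open>p \<notin> S\<close> assms(2) by blast
  then have "0 < dinf c p"
    using dinf_le_iff[of c p 0] by (auto simp: vec_eq_iff dinf_nonneg less_le)
  then have "u * dinf c p < dinf c p"
    using u \<open>u \<noteq> 1\<close> by simp
  with dinf_segment_le[OF u(1), of c p] assms(3)
  have "dinf c ((1 - u) *\<^sub>R c + u *\<^sub>R p) < width_at S c"
    by linarith
  with width_at_le_dinf[OF y, of c] show False
    by simp
qed

lemma abs_sub_round_to_multiple_le:
  fixes h x z :: real
  assumes "0 < h" and "z = 2 * h * \<lfloor>x / (2 * h)\<rfloor>"
  shows "\<bar>x - (if x - z < h then z else z + 2 * h)\<bar> \<le> h"
proof -
  have "z \<le> x" "x < z + 2 * h"
    using floor_divide_lower[of "2 * h" x] floor_divide_upper[of "2 * h" x] assms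
    by (simp_all add: algebra_simps)
  then show ?thesis
    by auto
qed

lemma powr_floor_log_le:
  fixes b w :: real
  assumes "1 < b" and "0 < w"
  shows "b powr \<lfloor>log b w\<rfloor> \<le> w"
proof -
  have "b powr \<lfloor>log b w\<rfloor> \<le> b powr log b w"
    using assms(1) by (intro powr_mono) auto
  also have "\<dots> = w"
    using assms by simp
  finally show ?thesis .
qed

theorem lemma5:
  fixes \<sigma> :: "(real^'n) set" and c :: "real^'n" and w :: real and i :: int
    and z f :: "'n \<Rightarrow> real" and r :: "real^'n"
  assumes "is_object \<sigma>"
    and "is_center \<sigma> c"
    and "w = width_at \<sigma> c"
    and "w \<ge> 1"
    and "i = \<lfloor>log 2 w\<rfloor>"
    and "\<And>j. z j = 2 powr (i + 1) * \<lfloor>c $ j / 2 powr (i + 1)\<rfloor>"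
    and "\<And>j. f j = c $ j - z j"
    and "\<And>j. r $ j = (if f j < 2 powr i then z j else z j + 2 powr (i + 1))"
  shows "r \<in> \<sigma>"
proof (rule mem_if_dinf_le_width_at)
  show "closed \<sigma>" and "c \<in> \<sigma>"
    using assms(1,2) compact_imp_closed by (auto simp: is_object_def is_center_def)
  have double: "2 powr real_of_int (i + 1) = 2 * 2 powr i"
    by (simp add: powr_add)
  have "\<bar>c $ j - r $ j\<bar> \<le> 2 powr i" for j
    unfolding assms(8)[of j, unfolded double] assms(7)[of j]
    by (rule abs_sub_round_to_multiple_le) (simp, simp only: assms(6) double)
  moreover have "2 powr i \<le> w"
    using powr_floor_log_le[of 2 w] assms(4,5) by simp
  ultimately show "dinf c r \<le> width_at \<sigma> c"
    using assms(3) dinf_le_iff order_trans by blast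
qed

end
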